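(* Let $n$ be one of the integers for which $\mathbb{Z}[\xi_n]$ has class number one, let $\mathcal{M}_n=\mathbb{Z}[\xi_n]$ with $\xi_n=\exp(2\pi i/n)$, and let $I$ be a principal ideal of $\mathcal{M}_n$ of finite index. Consider the Bravais coloring of $\mathcal{M}_n$ determined by $I$, with symmetry group $G=T(G)\rtimes D_N$ and color symmetry group $H$ (notation as in the context). Then $T(G)\le H$ and $\phi_1\in H$.
   Context: Standing assumption: $n\in\{3,4,5,7,8,9,11,12,13,15,16,17,19,20,21,24,25,27,28,32,33,35,36,40,44,45,48,60,84\}$ (the values for which $\mathcal{M}_n=\mathbb{Z}[\xi_n]$, $\xi_n=\exp(2\pi i/n)$, is a principal ideal domain). Let $\varphi$ be Euler's function and $N=n$ if $n$ is even, $N=2n$ if $n$ is odd. Using the $\mathbb{Z}$-basis $\{1,\xi_n,\dots,\xi_n^{\varphi(n)-1}\}$ of $\mathcal{M}_n$, each element is identified with its integer coordinate vector, so $\mathcal{M}_n$ becomes a lattice $\Lambda=\mathbb{Z}^{\varphi(n)}\subset\mathbb{R}^{\varphi(n)}$, and a principal ideal $I$ of index $\ell$ becomes a sublattice $L\subseteq\Lambda$ of index $\ell$. Let $\phi_1$ be the linear map of $\mathbb{R}^{\varphi(n)}$ induced by multiplication by $\exp(2\pi i/N)$ (an $N$-fold rotation, which preserves $\mathcal{M}_n$) and $\phi_2$ the linear map induced by complex conjugation (a reflection); they generate a group $D_N\cong$ dihedral group of order $2N$. Let $T(G)=\{t_y: x\mapsto x+y \mid y\in\Lambda\}$. The symmetry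 group of $\Lambda$ is $G=T(G)\rtimes D_N$. The Bravais coloring determined by $I$ assigns to each element of $\Lambda$ one of $\ell$ colors, two elements getting the same color iff they lie in the same coset of $L$ in $\Lambda$. The color symmetry group $H$ is the set of $g\in G$ that permute the colors, i.e. for every coset $x+L$ the image $g(x+L)$ is again a coset of $L$. The color fixing group $K$ is the set of $g\in H$ with $g(x+L)=x+L$ for every $x\in\Lambda$. *)

theory Defs
  imports "HOL-Analysis.Analysis"
begin

definition class_number_one_n :: "nat set" where
  "class_number_one_n = {3,4,5,7,8,9,11,12,13,15,16,17,19,20,21,24,25,27,28,32,33,35,36,40,44,45,48,60,84}"

definition xi :: "nat \<Rightarrow> complex" where
  "xi n = cis (2 * pi / real n)"

definition Mn :: "nat \<Rightarrow> complex set" where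
  "Mn n = {z. \<exists>(c :: nat \<Rightarrow> int) (k :: nat). z = (\<Sum>i<k. of_int (c i) * xi n ^ i)}"

definition bigN :: "nat \<Rightarrow> nat" where
  "bigN n = (if even n then n else 2 * n)"

definition principal_ideal :: "nat \<Rightarrow> complex \<Rightarrow> complex set" where
  "principal_ideal n a = (\<lambda>x. a * x) ` Mn n"

definition coset :: "complex \<Rightarrow> complex set \<Rightarrow> complex set" where
  "coset x L = (\<lambda>z. x + z) ` L"

definition phi1 :: "nat \<Rightarrow> complex \<Rightarrow> complex" where
  "phi1 n z = cis (2 * pi / real (bigN n)) * z"

definition phi2 :: "complex \<Rightarrow> complex" where
  "phi2 z = cnj z"

definition DN :: "nat \<Rightarrow> (complex \<Rightarrow> complex) set" where
  "DN n = {(phi1 n ^^ k) | k. True} \<union> {(phi1 n ^^ k) \<circ> phi2 | k. True}"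

definition translation :: "complex \<Rightarrow> complex \<Rightarrow> complex" where
  "translation y = (\<lambda>x. x + y)"

definition TG :: "nat \<Rightarrow> (complex \<Rightarrow> complex) set" where
  "TG n = translation ` Mn n"

definition symG :: "nat \<Rightarrow> (complex \<Rightarrow> complex) set" where
  "symG n = {t \<circ> d | t d. t \<in> TG n \<and> d \<in> DN n}"

definition color_symmetry_group :: "nat \<Rightarrow> complex set \<Rightarrow> (complex \<Rightarrow> complex) set" where
  "color_symmetry_group n L =
     {g \<in> symG n. \<forall>x \<in> Mn n. \<exists>y \<in> Mn n. g ` coset x L = coset y L}"

end

theory Submission
  imports Defs
begin

text \<open>Translations by lattice vectors permute the cosets of any sublattice. The rotation
  \<open>\<omega> = exp(2\<pi>i/N)\<close> equals \<open>\<xi>\<close> for even \<open>n\<close> and \<open>-\<xi>^((n+1)/2)\<close> for odd \<open>n\<close>, so it is a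
  unit of \<open>Z[\<xi>]\<close>; multiplication by \<open>\<omega>\<close> therefore maps \<open>aZ[\<xi>]\<close> onto itself and sends the
  coset \<open>x + aZ[\<xi>]\<close> to \<open>\<omega>x + aZ[\<xi>]\<close>. Neither argument uses that \<open>Z[\<xi>]\<close> is a principal ideal
  domain or that the index is finite.\<close>

lemma Mn_zero: "0 \<in> Mn n"
  unfolding Mn_def by (auto intro!: exI[of _ 0])

lemma Mn_add:
  assumes "x \<in> Mn n" "y \<in> Mn n"
  shows "x + y \<in> Mn n"
proof -
  obtain c k where x: "x = (\<Sum>i<k. of_int (c i) * xi n ^ i)" using assms(1) unfolding Mn_def by blast
  obtain d l where y: "y = (\<Sum>i<l. of_int (d i) * xi n ^ i)" using assms(2) unfolding Mn_def by blast
  define m where "m = max k l"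
  define e where "e = (\<lambda>i. (if i < k then c i else 0) + (if i < l then d i else 0))"
  have "x = (\<Sum>i<m. of_int (if i < k then c i else 0) * xi n ^ i)"
    unfolding x m_def by (rule sum.mono_neutral_cong_left) auto
  moreover have "y = (\<Sum>i<m. of_int (if i < l then d i else 0) * xi n ^ i)"
    unfolding y m_def by (rule sum.mono_neutral_cong_left) auto
  ultimately have "x + y = (\<Sum>i<m. of_int (e i) * xi n ^ i)"
    by (simp add: e_def sum.distrib[symmetric] distrib_right)
  then show ?thesis unfolding Mn_def by (intro CollectI exI[of _ e] exI[of _ m])
qed

lemma Mn_uminus:
  assumes "x \<in> Mn n"
  shows "- x \<in> Mn n"
proof -
  obtain c k where x: "x = (\<Sum>i<k. of_int (c i) * xi n ^ i)" using assms unfolding Mn_def by blast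
  have "- x = (\<Sum>i<k. of_int (- c i) * xi n ^ i)"
    unfolding x by (simp add: sum_negf[symmetric])
  then show ?thesis unfolding Mn_def by (intro CollectI exI[of _ "\<lambda>i. - c i"] exI[of _ k])
qed

lemma Mn_mult_xi:
  assumes "x \<in> Mn n"
  shows "xi n * x \<in> Mn n"
proof -
  obtain c k where x: "x = (\<Sum>i<k. of_int (c i) * xi n ^ i)" using assms unfolding Mn_def by blast
  define d where "d = (\<lambda>i. if i = 0 then 0 else c (i - 1))"
  have "(\<Sum>i<Suc k. of_int (d i) * xi n ^ i) = (\<Sum>i<k. of_int (d (Suc i)) * xi n ^ Suc i)"
    by (subst sum.lessThan_Suc_shift) (simp add: d_def)
  also have "\<dots> = xi n * x"
    unfolding x by (simp add: d_def sum_distrib_left ac_simps)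
  finally show ?thesis unfolding Mn_def by (intro CollectI exI[of _ d] exI[of _ "Suc k"]) simp
qed

lemma power_mult_mem_if_mult_mem:
  fixes c :: "'a :: monoid_mult"
  assumes "\<And>z. z \<in> S \<Longrightarrow> c * z \<in> S" "z \<in> S"
  shows "c ^ m * z \<in> S"
  by (induction m) (simp_all add: assms mult.assoc)

lemma mult_image_eq_if_root_of_unity:
  fixes c :: "'a :: monoid_mult"
  assumes mult_mem: "\<And>z. z \<in> S \<Longrightarrow> c * z \<in> S" and root: "c ^ Suc k = 1"
  shows "(\<lambda>z. c * z) ` S = S"
proof
  show "(\<lambda>z. c * z) ` S \<subseteq> S" using mult_mem by blast
  show "S \<subseteq> (\<lambda>z. c * z) ` S"
  proof
    fix z assume "z \<in> S"
    then have "c ^ k * z \<in> S" using power_mult_mem_if_mult_mem mult_mem by blast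
    moreover have "z = c * (c ^ k * z)" using root by (simp add: mult.assoc[symmetric])
    ultimately show "z \<in> (\<lambda>z. c * z) ` S" by blast
  qed
qed

definition omega :: "nat \<Rightarrow> complex" where
  "omega n = cis (2 * pi / real (bigN n))"

lemma phi1_eq_mult_omega: "phi1 n z = omega n * z"
  by (simp add: phi1_def omega_def)

lemma omega_eq_pm_xi_power:
  assumes "n > 0"
  obtains m where "omega n = xi n ^ m \<or> omega n = - (xi n ^ m)"
proof (cases "even n")
  case True
  then have "omega n = xi n ^ 1" by (simp add: omega_def bigN_def xi_def)
  then show ?thesis using that by blast
next
  case False
  then obtain j where j: "n = 2 * j + 1" by (metis oddE)
  have "xi n ^ (j + 1) = cis (real (j + 1) * (2 * pi / real n))"
    unfolding xi_def by (rule Complex.DeMoivre)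
  also have "real (j + 1) * (2 * pi / real n) = pi + 2 * pi / real (bigN n)"
    using False j by (simp add: bigN_def field_simps)
  also have "cis (pi + 2 * pi / real (bigN n)) = - omega n"
    by (simp add: omega_def cis_mult[symmetric])
  finally have "omega n = - (xi n ^ (j + 1))" by simp
  then show ?thesis using that by blast
qed

lemma Mn_mult_omega:
  assumes "n > 0" "x \<in> Mn n"
  shows "omega n * x \<in> Mn n"
proof -
  obtain m where "omega n = xi n ^ m \<or> omega n = - (xi n ^ m)"
    using omega_eq_pm_xi_power[OF assms(1)] .
  moreover have "xi n ^ m * x \<in> Mn n"
    using power_mult_mem_if_mult_mem[of "Mn n"] Mn_mult_xi assms(2) by blast
  ultimately show ?thesis using Mn_uminus by auto
qed

lemma omega_power_bigN:
  assumes "n > 0"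
  shows "omega n ^ bigN n = 1"
proof -
  have "bigN n > 0" using assms by (simp add: bigN_def)
  have "omega n ^ bigN n = cis (real (bigN n) * (2 * pi / real (bigN n)))"
    unfolding omega_def by (rule Complex.DeMoivre)
  also have "real (bigN n) * (2 * pi / real (bigN n)) = 2 * pi" using \<open>bigN n > 0\<close> by simp
  finally show ?thesis by simp
qed

lemma mult_omega_image_Mn:
  assumes "n > 0"
  shows "(\<lambda>z. omega n * z) ` Mn n = Mn n"
proof -
  have "bigN n = Suc (bigN n - 1)" using assms by (simp add: bigN_def)
  then have "omega n ^ Suc (bigN n - 1) = 1" using omega_power_bigN[OF assms] by metis
  then show ?thesis using mult_image_eq_if_root_of_unity Mn_mult_omega[OF assms] by blast
qed

lemma mult_image_principal_ideal:
  assumes "(\<lambda>z. c * z) ` Mn n = Mn n"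
  shows "(\<lambda>z. c * z) ` principal_ideal n a = principal_ideal n a"
proof -
  have "(\<lambda>z. c * z) ` principal_ideal n a = (\<lambda>z. a * z) ` ((\<lambda>z. c * z) ` Mn n)"
    unfolding principal_ideal_def image_image by (simp add: mult.left_commute)
  then show ?thesis using assms by (simp add: principal_ideal_def)
qed

lemma additive_image_coset:
  assumes "\<And>u v. f (u + v) = f u + f v" "f ` L = L"
  shows "f ` coset x L = coset (f x) L"
proof -
  have "f ` coset x L = (\<lambda>z. f x + z) ` (f ` L)"
    unfolding coset_def image_image assms(1) ..
  then show ?thesis using assms(2) by (simp add: coset_def)
qed

lemma translation_image_coset: "translation y ` coset x L = coset (x + y) L"
  unfolding coset_def translation_def image_image by (simp add: ac_simps)

lemma TG_subset_symG: "TG n \<subseteq> symG n"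
proof
  fix t assume "t \<in> TG n"
  moreover have "id \<in> DN n" unfolding DN_def by (auto intro: exI[of _ 0])
  ultimately show "t \<in> symG n" unfolding symG_def by (metis (mono_tags, lifting) comp_id mem_Collect_eq)
qed

lemma DN_subset_symG: "DN n \<subseteq> symG n"
proof
  fix d assume "d \<in> DN n"
  moreover have "translation 0 \<in> TG n" using Mn_zero by (simp add: TG_def)
  moreover have "d = translation 0 \<circ> d" by (auto simp: translation_def)
  ultimately show "d \<in> symG n" unfolding symG_def by blast
qed

lemma color_symmetry_groupI:
  assumes "g \<in> symG n" "\<And>x. x \<in> Mn n \<Longrightarrow> f x \<in> Mn n \<and> g ` coset x L = coset (f x) L"
  shows "g \<in> color_symmetry_group n L"
  using assms unfolding color_symmetry_group_def by blast

lemma TG_subset_color_symmetry_group: "TG n \<subseteq> color_symmetry_group n L"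
proof
  fix t assume t: "t \<in> TG n"
  then obtain y where "y \<in> Mn n" "t = translation y" unfolding TG_def by blast
  then show "t \<in> color_symmetry_group n L"
    using t TG_subset_symG Mn_add translation_image_coset
    by (intro color_symmetry_groupI[where f = "\<lambda>x. x + y"]) auto
qed

lemma phi1_in_color_symmetry_group:
  assumes "n > 0"
  shows "phi1 n \<in> color_symmetry_group n (principal_ideal n a)"
proof (rule color_symmetry_groupI[where f = "phi1 n"])
  show "phi1 n \<in> symG n"
    using DN_subset_symG unfolding DN_def by (force intro: exI[of _ 1])
  have "phi1 n ` principal_ideal n a = principal_ideal n a"
    using mult_image_principal_ideal[OF mult_omega_image_Mn[OF assms]]
    by (simp add: phi1_eq_mult_omega[abs_def])
  then have "phi1 n ` coset x (principal_ideal n a) = coset (phi1 n x) (principal_ideal n a)" for x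
    by (intro additive_image_coset) (simp_all add: phi1_eq_mult_omega distrib_left)
  then show "phi1 n x \<in> Mn n \<and> phi1 n ` coset x (principal_ideal n a)
               = coset (phi1 n x) (principal_ideal n a)" if "x \<in> Mn n" for x
    using Mn_mult_omega[OF assms that] by (simp add: phi1_eq_mult_omega)
qed

theorem theorem3p1p1:
  fixes n :: nat and a :: complex
  assumes "n \<in> class_number_one_n"
    and "a \<in> Mn n"
    and "finite {coset x (principal_ideal n a) | x. x \<in> Mn n}"
  shows "TG n \<subseteq> color_symmetry_group n (principal_ideal n a)
       \<and> phi1 n \<in> color_symmetry_group n (principal_ideal n a)"
proof -
  have "n > 0" using assms(1) by (auto simp: class_number_one_n_def)
  then show ?thesis using TG_subset_color_symmetry_group phi1_in_color_symmetry_group by blast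
qed

end
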